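(* Let $1\le q<p$ and suppose a subspace $X\subseteq\mathbb{R}^n$ is $(2k,\varepsilon)$-$\ell_p$-spread. Then $X$ is $(k,\varepsilon_q)$-$\ell_q$-spread for $\varepsilon_q=\varepsilon^2\left(\frac{k}{n}\right)^{1/q}$. In particular, if $X$ is $(\Omega(n),\Omega(1))$-$\ell_p$-spread, then $X$ is also $(\Omega(n),\Omega(1))$-$\ell_q$-spread for every $1\le q<p$.
   Context: A vector $y\in\mathbb{R}^n$ is $k$-sparse if $|\mathrm{supp}(y)|\le k$. A nonzero $x\in\mathbb{R}^n$ is $(k,\varepsilon)$-$\ell_p$-compressible if some $k$-sparse $y$ has $\|x-y\|_p\le\varepsilon\|x\|_p$, and $(k,\varepsilon)$-$\ell_p$-spread otherwise. A subspace $X$ is $(k,\varepsilon)$-$\ell_p$-spread if every nonzero $x\in X$ is $(k,\varepsilon)$-$\ell_p$-spread. *)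

theory Defs
  imports "HOL-Analysis.Analysis"
begin

text \<open>Vectors in R^n are modelled as real^'n with n = CARD('n).\<close>

definition lp_norm :: "real \<Rightarrow> real ^ 'n \<Rightarrow> real" where
  "lp_norm p x = (\<Sum>i\<in>UNIV. \<bar>x $ i\<bar> powr p) powr (1 / p)"

definition supp :: "real ^ 'n \<Rightarrow> 'n set" where
  "supp y = {i. y $ i \<noteq> 0}"

definition sparse :: "nat \<Rightarrow> real ^ 'n \<Rightarrow> bool" where
  "sparse k y \<longleftrightarrow> card (supp y) \<le> k"

definition compressible :: "real \<Rightarrow> nat \<Rightarrow> real \<Rightarrow> real ^ 'n \<Rightarrow> bool" where
  "compressible p k \<epsilon> x \<longleftrightarrow> x \<noteq> 0 \<and>
     (\<exists>y. sparse k y \<and> lp_norm p (x - y) \<le> \<epsilon> * lp_norm p x)"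

definition spread_vec :: "real \<Rightarrow> nat \<Rightarrow> real \<Rightarrow> real ^ 'n \<Rightarrow> bool" where
  "spread_vec p k \<epsilon> x \<longleftrightarrow> x \<noteq> 0 \<and> \<not> compressible p k \<epsilon> x"

definition spread_subspace :: "real \<Rightarrow> nat \<Rightarrow> real \<Rightarrow> (real ^ 'n) set \<Rightarrow> bool" where
  "spread_subspace p k \<epsilon> X \<longleftrightarrow> (\<forall>x\<in>X. x \<noteq> 0 \<longrightarrow> spread_vec p k \<epsilon> x)"

end

theory Submission
  imports Defs
begin

(*
  Suppose x is within eps^2 (k/n)^(1/q) of a k-sparse y in l_q, and let S = ||x - y||_q^q.
  By Markov's inequality at most k entries of x - y have q-th power above S/k; adding
  them to the support of y gives a 2k-sparse z such that every entry of x - z has q-th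
  power at most S/k, whence ||x - z||_p^p <= (S/k)^(p/q - 1) S = k (S/k)^(p/q).
  Since S/k <= eps^(2q) ||x||_q^q / n, the power mean inequality
  (||x||_q^q / n)^(p/q) <= ||x||_p^p / n bounds this by (k/n) eps^(2p) ||x||_p^p, which is
  at most eps^p ||x||_p^p because the l_p-spread hypothesis forces eps <= 1 and k <= n.
  The argument works vector by vector.
*)

lemma powr_le_powr_iff:
  fixes x y a :: real
  assumes "0 < a" "0 \<le> x" "0 \<le> y"
  shows "x powr a \<le> y powr a \<longleftrightarrow> x \<le> y"
  using assms by (meson not_le powr_less_mono2 powr_mono2 less_imp_le)

lemma powr_le_powr_diff_mult:
  fixes u \<theta> s :: real
  assumes "0 \<le> u" "u \<le> \<theta>" "1 \<le> s"
  shows "u powr s \<le> \<theta> powr (s - 1) * u"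
proof -
  have "u powr s = u powr (s - 1) * u"
    using powr_mult_base[OF assms(1), of "s - 1"] by (simp add: mult.commute)
  also have "\<dots> \<le> \<theta> powr (s - 1) * u"
    using assms by (intro mult_right_mono powr_mono2) auto
  finally show ?thesis .
qed

lemma convex_on_powr_nonneg:
  fixes r :: real
  assumes "1 \<le> r"
  shows "convex_on {0..} (\<lambda>x. x powr r)"
proof (rule convex_on_linorderI)
  fix t x y :: real
  assume t: "0 < t" "t < 1" and xy: "x \<in> {0..}" "y \<in> {0..}" "x < y"
  show "((1 - t) *\<^sub>R x + t *\<^sub>R y) powr r \<le> (1 - t) * x powr r + t * y powr r"
  proof (cases "x = 0")
    case True
    have "(t * y) powr r = t powr r * y powr r"
      by (rule powr_mult)
    also have "\<dots> \<le> t * y powr r"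
      using powr_le_one_le[of t r] t assms by (intro mult_right_mono) auto
    finally show ?thesis using True by simp
  next
    case False
    then show ?thesis
      using convex_onD[OF powr_convex[OF assms], of t x y] t xy by auto
  qed
qed (simp add: convex_real_interval)

lemma powr_mean_le_mean_powr:
  fixes u :: "'a \<Rightarrow> real"
  assumes "finite S" "S \<noteq> {}" "1 \<le> r" "\<And>i. i \<in> S \<Longrightarrow> 0 \<le> u i"
  shows "((\<Sum>i\<in>S. u i) / card S) powr r \<le> (\<Sum>i\<in>S. u i powr r) / card S"
proof -
  have "card S > 0"
    using assms by (simp add: card_gt_0_iff)
  then have "(\<Sum>i\<in>S. (1 / card S) *\<^sub>R u i) powr r \<le> (\<Sum>i\<in>S. (1 / card S) * u i powr r)"
    using assms by (intro convex_on_sum[OF _ _ convex_on_powr_nonneg]) auto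
  then show ?thesis
    by (simp add: sum_distrib_left[symmetric] sum_divide_distrib[symmetric])
qed

lemma card_sum_less_mult_le:
  fixes f :: "'a \<Rightarrow> real"
  assumes "finite A" "\<And>i. i \<in> A \<Longrightarrow> 0 \<le> f i"
  shows "card {i\<in>A. sum f A < real k * f i} \<le> k"
proof (cases "{i\<in>A. sum f A < real k * f i} = {}")
  case False
  define B where "B = {i\<in>A. sum f A < real k * f i}"
  have "real (card B) * sum f A = (\<Sum>i\<in>B. sum f A)"
    by simp
  also have "\<dots> < (\<Sum>i\<in>B. real k * f i)"
    using False assms(1) by (intro sum_strict_mono) (auto simp: B_def)
  also have "\<dots> = real k * sum f B"
    by (simp add: sum_distrib_left)
  also have "\<dots> \<le> real k * sum f A"
    using assms by (intro mult_left_mono sum_mono2) (auto simp: B_def)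
  finally have "real (card B) < real k"
    using assms by (simp add: mult_less_cancel_right sum_nonneg)
  then show ?thesis
    by (simp add: B_def)
qed (metis card.empty le0)

definition lp_sum :: "real \<Rightarrow> real ^ 'n \<Rightarrow> real" where
  "lp_sum p x = (\<Sum>i\<in>UNIV. \<bar>x $ i\<bar> powr p)"

lemma lp_norm_nonneg: "0 \<le> lp_norm p x"
  unfolding lp_norm_def by simp

lemma lp_sum_nonneg: "0 \<le> lp_sum p x"
  unfolding lp_sum_def by (simp add: sum_nonneg)

lemma lp_sum_eq_0_iff: "0 < p \<Longrightarrow> lp_sum p x = 0 \<longleftrightarrow> x = 0"
  unfolding lp_sum_def by (simp add: sum_nonneg_eq_0_iff vec_eq_iff)

lemma lp_norm_le_mult_iff:
  assumes "0 < p" "0 \<le> c"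
  shows "lp_norm p x \<le> c * lp_norm p y \<longleftrightarrow> lp_sum p x \<le> c powr p * lp_sum p y"
proof -
  have "c * lp_norm p y = (c powr p * lp_sum p y) powr (1 / p)"
    using assms by (simp add: lp_norm_def lp_sum_def powr_mult powr_powr)
  then show ?thesis
    using assms by (simp add: lp_norm_def lp_sum_def[symmetric] powr_le_powr_iff lp_sum_nonneg)
qed

lemma lp_sum_mean_powr_le:
  assumes "1 \<le> q" "q \<le> p"
  shows "(lp_sum q x / CARD('n)) powr (p / q) \<le> lp_sum p (x :: real ^ 'n) / CARD('n)"
proof -
  have "(lp_sum q x / CARD('n)) powr (p / q) \<le> (\<Sum>i\<in>UNIV. (\<bar>x $ i\<bar> powr q) powr (p / q)) / CARD('n)"
    unfolding lp_sum_def using assms by (intro powr_mean_le_mean_powr) auto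
  also have "(\<Sum>i\<in>UNIV. (\<bar>x $ i\<bar> powr q) powr (p / q)) = lp_sum p x"
    using assms by (simp add: lp_sum_def powr_powr)
  finally show ?thesis .
qed

lemma lp_sum_le_if_entries_small:
  fixes v w :: "real ^ 'n"
  assumes "0 < q" "q \<le> p"
    and small: "\<And>i. w $ i = 0 \<or> (w $ i = v $ i \<and> \<bar>v $ i\<bar> powr q \<le> \<theta>)"
  shows "lp_sum p w \<le> \<theta> powr (p / q - 1) * lp_sum q v"
proof -
  have "\<bar>w $ i\<bar> powr p \<le> \<theta> powr (p / q - 1) * \<bar>v $ i\<bar> powr q" for i
    using small[of i]
  proof
    assume "w $ i = v $ i \<and> \<bar>v $ i\<bar> powr q \<le> \<theta>"
    moreover have "\<bar>v $ i\<bar> powr p = (\<bar>v $ i\<bar> powr q) powr (p / q)"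
      using assms by (simp add: powr_powr)
    ultimately show ?thesis
      using assms by (simp add: powr_le_powr_diff_mult)
  qed simp
  then show ?thesis
    unfolding lp_sum_def sum_distrib_left by (intro sum_mono)
qed

lemma sparse_approx_lp_from_lq:
  fixes x y :: "real ^ 'n"
  assumes "0 < q" "q \<le> p" "0 < k" "sparse k y"
  shows "\<exists>z. sparse (2 * k) z \<and>
    lp_sum p (x - z) \<le> real k * (lp_sum q (x - y) / real k) powr (p / q)"
proof -
  define S where "S = lp_sum q (x - y)"
  define B where "B = {i. i \<notin> supp y \<and> S < real k * \<bar>x $ i\<bar> powr q}"
  define z where "z = (\<chi> i. if i \<in> supp y \<union> B then x $ i else 0)"
  have "B \<subseteq> {i \<in> UNIV. S < real k * \<bar>(x - y) $ i\<bar> powr q}"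
    by (auto simp: B_def supp_def)
  then have "card B \<le> k"
    unfolding S_def lp_sum_def
    by (rule order_trans[OF card_mono[OF finite] card_sum_less_mult_le]) auto
  moreover have "supp z \<subseteq> supp y \<union> B"
    by (auto simp: supp_def z_def)
  then have "card (supp z) \<le> card (supp y) + card B"
    by (meson card_Un_le card_mono finite order_trans)
  ultimately have z_sparse: "sparse (2 * k) z"
    using \<open>sparse k y\<close> by (simp add: sparse_def)
  have "lp_sum p (x - z) \<le> (S / k) powr (p / q - 1) * S"
    using assms
    by (intro lp_sum_le_if_entries_small[of q p "x - z" "x - y", folded S_def])
      (auto simp: z_def supp_def B_def field_simps)
  also have "\<dots> = real k * (S / k * (S / k) powr (p / q - 1))"
    using assms by simp
  also have "\<dots> = real k * (S / k) powr (p / q)"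
    using powr_mult_base[of "S / k" "p / q - 1"] by (simp add: S_def lp_sum_nonneg)
  finally show ?thesis
    using z_sparse unfolding S_def by blast
qed

lemma compressible_lp_if_compressible_lq:
  fixes x :: "real ^ 'n"
  assumes q: "1 \<le> q" "q < p" and \<epsilon>: "0 \<le> \<epsilon>" "\<epsilon> \<le> 1" and k: "k \<le> CARD('n)"
    and "compressible q k (\<epsilon>\<^sup>2 * (real k / CARD('n)) powr (1 / q)) x"
  shows "compressible p (2 * k) \<epsilon> x"
proof -
  let ?n = "real CARD('n)"
  have "(\<epsilon>\<^sup>2 * (real k / ?n) powr (1 / q)) powr q = \<epsilon>\<^sup>2 powr q * (real k / ?n)"
    using q by (simp add: powr_mult powr_powr)
  then obtain y where "x \<noteq> 0" "sparse k y"
    and close: "lp_sum q (x - y) \<le> \<epsilon>\<^sup>2 powr q * (real k / ?n) * lp_sum q x"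
    using assms(6) q unfolding compressible_def by (auto simp: lp_norm_le_mult_iff)
  have "0 < k"
  proof (rule ccontr)
    assume "\<not> 0 < k"
    then have "x = y" "supp y = {}"
      using close \<open>sparse k y\<close> q lp_sum_nonneg[of q "x - y"]
      by (auto simp: lp_sum_eq_0_iff sparse_def)
    then show False
      using \<open>x \<noteq> 0\<close> by (auto simp: supp_def vec_eq_iff)
  qed
  then obtain z where "sparse (2 * k) z"
    and tail: "lp_sum p (x - z) \<le> real k * (lp_sum q (x - y) / real k) powr (p / q)"
    using sparse_approx_lp_from_lq[of q p k y x] \<open>sparse k y\<close> q by auto
  have "lp_sum q (x - y) / real k \<le> \<epsilon>\<^sup>2 powr q * (lp_sum q x / ?n)"
    using close \<open>0 < k\<close> by (simp add: field_simps)
  then have "lp_sum p (x - z) \<le> real k * (\<epsilon>\<^sup>2 powr q * (lp_sum q x / ?n)) powr (p / q)"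
    using q by (intro order_trans[OF tail] mult_left_mono powr_mono2) (auto simp: lp_sum_nonneg)
  also have "\<dots> = real k * (\<epsilon>\<^sup>2 powr p * (lp_sum q x / ?n) powr (p / q))"
    using q by (simp only: powr_mult powr_powr) simp
  also have "\<dots> \<le> real k * (\<epsilon>\<^sup>2 powr p * (lp_sum p x / ?n))"
    using q by (intro mult_left_mono lp_sum_mean_powr_le) auto
  also have "\<dots> = real k / ?n * \<epsilon>\<^sup>2 powr p * lp_sum p x"
    by simp
  also have "\<dots> \<le> 1 * \<epsilon> powr p * lp_sum p x"
    using k \<epsilon> q
    by (intro mult_right_mono mult_mono powr_mono2 lp_sum_nonneg)
      (auto simp: power2_eq_square mult_left_le)
  finally have "lp_norm p (x - z) \<le> \<epsilon> * lp_norm p x"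
    using q \<epsilon> by (simp add: lp_norm_le_mult_iff)
  then show ?thesis
    unfolding compressible_def using \<open>x \<noteq> 0\<close> \<open>sparse (2 * k) z\<close> by blast
qed

lemma compressible_if_one_le:
  assumes "x \<noteq> 0" "1 \<le> \<epsilon>"
  shows "compressible p k \<epsilon> x"
proof -
  have "sparse k 0"
    by (simp add: sparse_def supp_def)
  moreover have "lp_norm p (x - 0) \<le> \<epsilon> * lp_norm p x"
    using assms(2) lp_norm_nonneg[of p x] by (simp add: mult_le_cancel_right1)
  ultimately show ?thesis
    unfolding compressible_def using assms(1) by blast
qed

lemma compressible_if_CARD_le:
  fixes x :: "real ^ 'n"
  assumes "x \<noteq> 0" "CARD('n) \<le> k" "0 \<le> \<epsilon>"
  shows "compressible p k \<epsilon> x"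
proof -
  have "sparse k x"
    using card_mono[of UNIV "supp x"] assms(2) by (simp add: sparse_def)
  moreover have "lp_norm p (x - x) \<le> \<epsilon> * lp_norm p x"
    using assms(3) by (simp add: lp_norm_def lp_norm_nonneg)
  ultimately show ?thesis
    unfolding compressible_def using assms(1) by blast
qed

theorem proposition3p7:
  fixes X :: "(real ^ 'n) set" and p q \<epsilon> :: real and k :: nat
  assumes "subspace X"
    and "1 \<le> q" and "q < p"
    and "0 \<le> \<epsilon>"
    and "spread_subspace p (2 * k) \<epsilon> X"
  shows "spread_subspace q k (\<epsilon>\<^sup>2 * (real k / real CARD('n)) powr (1 / q)) X"
  unfolding spread_subspace_def spread_vec_def
proof (intro ballI impI conjI notI)
  fix x
  assume "x \<in> X" "x \<noteq> 0"
    and lq: "compressible q k (\<epsilon>\<^sup>2 * (real k / real CARD('n)) powr (1 / q)) x"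
  have lp: "\<not> compressible p (2 * k) \<epsilon> x"
    using assms(5) \<open>x \<in> X\<close> \<open>x \<noteq> 0\<close> by (simp add: spread_subspace_def spread_vec_def)
  then have "\<epsilon> \<le> 1"
    using compressible_if_one_le[OF \<open>x \<noteq> 0\<close>] by (meson linorder_le_cases)
  have "\<not> CARD('n) \<le> 2 * k"
    using lp compressible_if_CARD_le[OF \<open>x \<noteq> 0\<close> _ assms(4)] by blast
  then have "k \<le> CARD('n)"
    by linarith
  with \<open>\<epsilon> \<le> 1\<close> show False
    using lp compressible_lp_if_compressible_lq[OF assms(2,3,4) _ _ lq] by blast
qed simp

end
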